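(* Let $J$ be an ideal of $\mathcal{O}_n$ of finite colength and let $L=\{j,\dots,n\}$ for some $j\in\{1,\dots,n\}$. Then $\operatorname{in}(J_L)=\operatorname{in}(J)_L$.
   Context: $\mathcal{O}_n$ is the ring of germs of analytic functions $(\mathbb{C}^n,0)\to\mathbb{C}$ in coordinates $x_1,\dots,x_n$. For $L\subseteq\{1,\dots,n\}$ nonempty, $\mathcal{O}_{n,L}$ is the subring of germs depending only on the variables $x_i$, $i\in L$. For $f=\sum_k a_kx^k\in\mathcal{O}_n$, $f_L$ is the sum of the terms $a_kx^k$ with $k_i=0$ for all $i\notin L$; for an ideal $J$ of $\mathcal{O}_n$, $J_L$ is the ideal of $\mathcal{O}_{n,L}$ generated by all $f_L$, $f\in J$. Monomials are ordered by the negative lexicographical order: $x^\alpha>x^\beta$ iff there is $i$ with $(\alpha_1,\dots,\alpha_{i-1})=(\beta_1,\dots,\beta_{i-1})$ and $\alpha_i<\beta_i$ (in $\mathcal{O}_{n,L}$ one uses the restriction of this order to monomials in the variables $x_i$, $i\in L$). For $f\neq0$, $\operatorname{in}(f)$ is the largest monomial in the support of $f$, and the initial ideal $\operatorname{in}(K)$ of an ideal $K$ is the ideal generated by all $\operatorname{in}(f)$, $f\in K$ (computed in $\mathcal{O}_{n,L}$ for $K=J_L$). *)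

theory Defs
  imports "HOL-Analysis.Analysis"
begin

text \<open>Germs of analytic functions at 0 are identified with convergent power series.
  An exponent vector is a function nat => nat (variables indexed 1..n);
  a power series is a coefficient function on exponent vectors.\<close>

type_synonym mon = "nat \<Rightarrow> nat"
type_synonym series = "mon \<Rightarrow> complex"

definition supp_in :: "nat set \<Rightarrow> mon \<Rightarrow> bool" where
  "supp_in L \<alpha> \<longleftrightarrow> (\<forall>i. i \<notin> L \<longrightarrow> \<alpha> i = 0)"

definition mdeg :: "nat set \<Rightarrow> mon \<Rightarrow> nat" where
  "mdeg L \<alpha> = (\<Sum>i\<in>L. \<alpha> i)"

definition conv_series :: "nat set \<Rightarrow> series set" where
  "conv_series L = {f. (\<forall>\<alpha>. f \<alpha> \<noteq> 0 \<longrightarrow> supp_in L \<alpha>) \<and>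
      (\<exists>r::real. r > 0 \<and> (\<lambda>\<alpha>. norm (f \<alpha>) * r ^ mdeg L \<alpha>) summable_on {\<alpha>. supp_in L \<alpha>})}"

definition szero :: series where "szero = (\<lambda>_. 0)"

definition sadd :: "series \<Rightarrow> series \<Rightarrow> series" where
  "sadd f g = (\<lambda>\<alpha>. f \<alpha> + g \<alpha>)"

definition ssmult :: "complex \<Rightarrow> series \<Rightarrow> series" where
  "ssmult c f = (\<lambda>\<alpha>. c * f \<alpha>)"

definition smult :: "series \<Rightarrow> series \<Rightarrow> series" where
  "smult f g = (\<lambda>\<alpha>. \<Sum>\<beta>\<in>{\<beta>. \<forall>i. \<beta> i \<le> \<alpha> i}. f \<beta> * g (\<lambda>i. \<alpha> i - \<beta> i))"

definition smonom :: "mon \<Rightarrow> series" where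
  "smonom \<alpha> = (\<lambda>\<beta>. if \<beta> = \<alpha> then 1 else 0)"

definition is_ideal :: "nat set \<Rightarrow> series set \<Rightarrow> bool" where
  "is_ideal L J \<longleftrightarrow> J \<subseteq> conv_series L \<and> szero \<in> J \<and>
     (\<forall>f\<in>J. \<forall>g\<in>J. sadd f g \<in> J) \<and> (\<forall>h\<in>conv_series L. \<forall>f\<in>J. smult h f \<in> J)"

definition ideal_gen :: "nat set \<Rightarrow> series set \<Rightarrow> series set" where
  "ideal_gen L S = \<Inter>{I. is_ideal L I \<and> S \<subseteq> I}"

definition trunc :: "nat set \<Rightarrow> series \<Rightarrow> series" where
  "trunc L f = (\<lambda>\<alpha>. if supp_in L \<alpha> then f \<alpha> else 0)"

definition restr_ideal :: "nat set \<Rightarrow> series set \<Rightarrow> series set" where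
  "restr_ideal L J = ideal_gen L (trunc L ` J)"

definition neglex_greater :: "mon \<Rightarrow> mon \<Rightarrow> bool" where
  "neglex_greater \<alpha> \<beta> \<longleftrightarrow> (\<exists>i. (\<forall>k<i. \<alpha> k = \<beta> k) \<and> \<alpha> i < \<beta> i)"

definition init_exp :: "series \<Rightarrow> mon" where
  "init_exp f = (THE \<alpha>. f \<alpha> \<noteq> 0 \<and> (\<forall>\<beta>. f \<beta> \<noteq> 0 \<longrightarrow> \<beta> = \<alpha> \<or> neglex_greater \<alpha> \<beta>))"

definition init_ideal :: "nat set \<Rightarrow> series set \<Rightarrow> series set" where
  "init_ideal L K = ideal_gen L {smonom (init_exp f) | f. f \<in> K \<and> f \<noteq> szero}"

text \<open>Finite colength: O_n / J is a finite-dimensional C-vector space.\<close>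
definition finite_colength :: "nat \<Rightarrow> series set \<Rightarrow> bool" where
  "finite_colength n J \<longleftrightarrow> (\<exists>G. finite G \<and> G \<subseteq> conv_series {1..n} \<and>
     (\<forall>f\<in>conv_series {1..n}. \<exists>c. sadd f (ssmult (-1) (\<lambda>\<alpha>. \<Sum>g\<in>G. c g * g \<alpha>)) \<in> J))"

end

theory Submission
  imports Defs
begin

text \<open>For the negative lexicographic order the variables outside \<open>L = {j..n}\<close> are the most
  significant ones. Hence if \<open>f\<^sub>L \<noteq> 0\<close>, the initial monomial of \<open>f\<close> involves no variable outside
  \<open>L\<close> and coincides with that of \<open>f\<^sub>L\<close>; if \<open>f\<^sub>L = 0\<close>, then \<open>in(f)\<^sub>L = 0\<close>. So truncating the
  generators \<open>in(f)\<close>, \<open>f \<in> J\<close>, of \<open>in(J)\<close> yields, up to zero, the generators \<open>in(f\<^sub>L)\<close> of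
  \<open>in(J\<^sub>L)\<close>; and truncation maps the ideal generated by a set onto the ideal generated by the
  truncated set, because \<open>(g f)\<^sub>L = g\<^sub>L f\<^sub>L\<close>.\<close>

abbreviation mon_divisors :: "mon \<Rightarrow> mon set" where
  "mon_divisors \<alpha> \<equiv> {\<beta>. \<forall>i. \<beta> i \<le> \<alpha> i}"

lemma finite_mon_divisors:
  assumes "finite L" "supp_in L \<alpha>"
  shows "finite (mon_divisors \<alpha>)"
proof -
  have "inj_on (\<lambda>\<beta>. restrict \<beta> L) (mon_divisors \<alpha>)"
  proof (rule inj_onI, rule ext)
    fix \<beta> \<gamma> i
    assume "\<beta> \<in> mon_divisors \<alpha>" "\<gamma> \<in> mon_divisors \<alpha>" "restrict \<beta> L = restrict \<gamma> L"
    then show "\<beta> i = \<gamma> i" using assms(2) unfolding supp_in_def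
      by (metis le_zero_eq mem_Collect_eq restrict_apply')
  qed
  moreover have "(\<lambda>\<beta>. restrict \<beta> L) ` mon_divisors \<alpha> \<subseteq> PiE L (\<lambda>i. {..\<alpha> i})" by auto
  moreover have "finite (PiE L (\<lambda>i. {..\<alpha> i}))" using assms(1) by (simp add: finite_PiE)
  ultimately show ?thesis by (meson finite_imageD finite_subset)
qed

lemma supp_in_mon_divisor:
  assumes "supp_in L \<alpha>" "\<beta> \<in> mon_divisors \<alpha>"
  shows "supp_in L \<beta>" "supp_in L (\<lambda>i. \<alpha> i - \<beta> i)"
  using assms unfolding supp_in_def by (metis le_zero_eq mem_Collect_eq, simp)

lemma supp_in_mon_divisor_pair:
  assumes "\<beta> \<in> mon_divisors \<alpha>" "supp_in L \<beta>" "supp_in L (\<lambda>i. \<alpha> i - \<beta> i)"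
  shows "supp_in L \<alpha>"
  unfolding supp_in_def
proof (intro allI impI)
  fix i assume "i \<notin> L"
  then have "\<beta> i = 0" "\<alpha> i - \<beta> i = 0" using assms(2,3) unfolding supp_in_def by auto
  then show "\<alpha> i = 0" by simp
qed

lemma mdeg_mon_divisor:
  assumes "\<beta> \<in> mon_divisors \<alpha>"
  shows "mdeg L \<alpha> = mdeg L \<beta> + mdeg L (\<lambda>i. \<alpha> i - \<beta> i)"
  unfolding mdeg_def sum.distrib[symmetric] using assms by (intro sum.cong) auto

lemma mdeg_supp_in:
  assumes "L \<subseteq> N" "finite N" "supp_in L \<alpha>"
  shows "mdeg N \<alpha> = mdeg L \<alpha>"
  unfolding mdeg_def by (rule sum.mono_neutral_right) (use assms in \<open>auto simp: supp_in_def\<close>)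

lemma convolution_summable_on:
  fixes a b :: "mon \<Rightarrow> real"
  assumes L: "finite L" and a: "a summable_on {\<alpha>. supp_in L \<alpha>}" "\<And>\<alpha>. a \<alpha> \<ge> 0"
    and b: "b summable_on {\<alpha>. supp_in L \<alpha>}" "\<And>\<alpha>. b \<alpha> \<ge> 0"
  shows "(\<lambda>\<alpha>. \<Sum>\<beta>\<in>mon_divisors \<alpha>. a \<beta> * b (\<lambda>i. \<alpha> i - \<beta> i)) summable_on {\<alpha>. supp_in L \<alpha>}"
proof (rule nonneg_bdd_above_summable_on)
  let ?P = "{\<alpha>. supp_in L \<alpha>}"
  show "\<And>\<alpha>. \<alpha> \<in> ?P \<Longrightarrow> (\<Sum>\<beta>\<in>mon_divisors \<alpha>. a \<beta> * b (\<lambda>i. \<alpha> i - \<beta> i)) \<ge> 0"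
    using a(2) b(2) by (simp add: sum_nonneg)
  show "bdd_above (sum (\<lambda>\<alpha>. \<Sum>\<beta>\<in>mon_divisors \<alpha>. a \<beta> * b (\<lambda>i. \<alpha> i - \<beta> i)) ` {F. F \<subseteq> ?P \<and> finite F})"
  proof (rule bdd_aboveI2)
    fix F assume "F \<in> {F. F \<subseteq> ?P \<and> finite F}"
    then have F: "F \<subseteq> ?P" "finite F" by auto
    have fin_div: "\<And>\<alpha>. \<alpha> \<in> F \<Longrightarrow> finite (mon_divisors \<alpha>)" using F L finite_mon_divisors by blast
    \<comment> \<open>A pair \<open>(\<alpha>, \<beta>)\<close> with \<open>\<beta>\<close> dividing \<open>\<alpha>\<close> is determined by the factorisation \<open>(\<beta>, \<alpha> - \<beta>)\<close>.\<close>
    define h where "h = (\<lambda>(\<alpha>::mon, \<beta>::mon). (\<beta>, (\<lambda>i. \<alpha> i - \<beta> i)))"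
    define S where "S = Sigma F mon_divisors"
    have fin_S: "finite S" unfolding S_def using F fin_div by auto
    have inj: "inj_on h S"
    proof (rule inj_onI)
      fix x y assume "x \<in> S" "y \<in> S" "h x = h y"
      then show "x = y" unfolding S_def h_def
        by (cases x; cases y; auto) (rule ext, metis le_add_diff_inverse)
    qed
    define A where "A = fst ` h ` S"
    define B where "B = snd ` h ` S"
    have "A \<subseteq> ?P" "B \<subseteq> ?P"
      unfolding A_def B_def S_def h_def using F supp_in_mon_divisor by fastforce+
    moreover have "finite A" "finite B" unfolding A_def B_def using fin_S by auto
    ultimately have sums_le: "sum a A \<le> infsum a ?P" "sum b B \<le> infsum b ?P"
      using finite_sum_le_infsum a b by blast+
    have "(\<Sum>\<alpha>\<in>F. \<Sum>\<beta>\<in>mon_divisors \<alpha>. a \<beta> * b (\<lambda>i. \<alpha> i - \<beta> i))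
        = (\<Sum>(\<alpha>,\<beta>)\<in>S. a \<beta> * b (\<lambda>i. \<alpha> i - \<beta> i))"
      unfolding S_def using sum.Sigma[OF F(2), of mon_divisors] fin_div by auto
    also have "\<dots> = (\<Sum>p\<in>h ` S. a (fst p) * b (snd p))"
      using sum.reindex[OF inj, of "\<lambda>p. a (fst p) * b (snd p)"] by (simp add: h_def case_prod_beta)
    also have "\<dots> \<le> (\<Sum>p\<in>A \<times> B. a (fst p) * b (snd p))"
    proof (rule sum_mono2)
      show "h ` S \<subseteq> A \<times> B" unfolding A_def B_def by (simp add: subset_iff mem_Times_iff)
    qed (use \<open>finite A\<close> \<open>finite B\<close> a(2) b(2) in auto)
    also have "\<dots> = sum a A * sum b B"
      by (simp add: sum_product sum.cartesian_product case_prod_beta)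
    also have "\<dots> \<le> infsum a ?P * infsum b ?P"
      using sums_le a(2) b(2) by (intro mult_mono) (auto intro: sum_nonneg infsum_nonneg)
    finally show "(\<Sum>\<alpha>\<in>F. \<Sum>\<beta>\<in>mon_divisors \<alpha>. a \<beta> * b (\<lambda>i. \<alpha> i - \<beta> i))
        \<le> infsum a ?P * infsum b ?P" .
  qed
qed

lemma conv_series_supp_in: "f \<in> conv_series L \<Longrightarrow> f \<alpha> \<noteq> 0 \<Longrightarrow> supp_in L \<alpha>"
  unfolding conv_series_def by blast

lemma conv_series_radius_mono:
  assumes "(\<lambda>\<alpha>. norm (f \<alpha>) * r ^ mdeg L \<alpha>) summable_on A" "0 < s" "s \<le> r"
  shows "(\<lambda>\<alpha>. norm (f \<alpha>) * s ^ mdeg L \<alpha>) summable_on A"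
  by (rule summable_on_comparison_test[OF assms(1)]) (use assms(2,3) in \<open>auto intro!: mult_left_mono power_mono\<close>)

lemma conv_series_common_radius:
  assumes "f \<in> conv_series L" "g \<in> conv_series L"
  obtains r where "r > 0"
    "(\<lambda>\<alpha>. norm (f \<alpha>) * r ^ mdeg L \<alpha>) summable_on {\<alpha>. supp_in L \<alpha>}"
    "(\<lambda>\<alpha>. norm (g \<alpha>) * r ^ mdeg L \<alpha>) summable_on {\<alpha>. supp_in L \<alpha>}"
proof -
  obtain rf rg where "rf > 0" "(\<lambda>\<alpha>. norm (f \<alpha>) * rf ^ mdeg L \<alpha>) summable_on {\<alpha>. supp_in L \<alpha>}"
    "rg > 0" "(\<lambda>\<alpha>. norm (g \<alpha>) * rg ^ mdeg L \<alpha>) summable_on {\<alpha>. supp_in L \<alpha>}"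
    using assms unfolding conv_series_def by blast
  moreover have "min rf rg > 0" "min rf rg \<le> rf" "min rf rg \<le> rg" using \<open>rf > 0\<close> \<open>rg > 0\<close> by auto
  ultimately show ?thesis using that conv_series_radius_mono by blast
qed

lemma conv_seriesI:
  assumes "\<And>\<alpha>. f \<alpha> \<noteq> 0 \<Longrightarrow> supp_in L \<alpha>" "r > 0"
    "(\<lambda>\<alpha>. norm (f \<alpha>) * r ^ mdeg L \<alpha>) summable_on {\<alpha>. supp_in L \<alpha>}"
  shows "f \<in> conv_series L"
  using assms unfolding conv_series_def by blast

lemma szero_conv_series: "szero \<in> conv_series L"
  by (rule conv_seriesI[of _ _ 1]) (auto simp: szero_def)

lemma smonom_conv_series: "supp_in L \<alpha> \<Longrightarrow> smonom \<alpha> \<in> conv_series L"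
proof (rule conv_seriesI[of _ _ 1])
  show "(\<lambda>\<beta>. norm (smonom \<alpha> \<beta>) * 1 ^ mdeg L \<beta>) summable_on {\<beta>. supp_in L \<beta>}"
    by (rule finite_nonzero_values_imp_summable_on) (simp add: smonom_def)
qed (auto simp: smonom_def split: if_splits)

lemma sadd_conv_series:
  assumes f: "f \<in> conv_series L" and g: "g \<in> conv_series L"
  shows "sadd f g \<in> conv_series L"
proof -
  obtain r where r: "r > 0"
    "(\<lambda>\<alpha>. norm (f \<alpha>) * r ^ mdeg L \<alpha>) summable_on {\<alpha>. supp_in L \<alpha>}"
    "(\<lambda>\<alpha>. norm (g \<alpha>) * r ^ mdeg L \<alpha>) summable_on {\<alpha>. supp_in L \<alpha>}"
    using conv_series_common_radius[OF f g] .
  show ?thesis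
  proof (rule conv_seriesI[OF _ r(1)])
    show "(\<lambda>\<alpha>. norm (sadd f g \<alpha>) * r ^ mdeg L \<alpha>) summable_on {\<alpha>. supp_in L \<alpha>}"
      by (rule summable_on_comparison_test[OF summable_on_add[OF r(2,3)]])
        (use r(1) in \<open>auto simp: sadd_def distrib_right[symmetric] intro!: mult_right_mono norm_triangle_ineq\<close>)
  next
    fix \<alpha> assume "sadd f g \<alpha> \<noteq> 0"
    then have "f \<alpha> \<noteq> 0 \<or> g \<alpha> \<noteq> 0" by (auto simp: sadd_def)
    then show "supp_in L \<alpha>" using conv_series_supp_in f g by blast
  qed
qed

lemma smult_supp_in:
  assumes "f \<in> conv_series L" "g \<in> conv_series L" "smult f g \<alpha> \<noteq> 0"
  shows "supp_in L \<alpha>"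
proof -
  obtain \<beta> where "\<beta> \<in> mon_divisors \<alpha>" "f \<beta> * g (\<lambda>i. \<alpha> i - \<beta> i) \<noteq> 0"
    using assms(3) unfolding smult_def by (meson sum.neutral)
  then show ?thesis
    using supp_in_mon_divisor_pair conv_series_supp_in[OF assms(1)] conv_series_supp_in[OF assms(2)]
    by simp
qed

lemma smult_conv_series:
  assumes L: "finite L" and f: "f \<in> conv_series L" and g: "g \<in> conv_series L"
  shows "smult f g \<in> conv_series L"
proof -
  obtain r where r: "r > 0"
    "(\<lambda>\<alpha>. norm (f \<alpha>) * r ^ mdeg L \<alpha>) summable_on {\<alpha>. supp_in L \<alpha>}"
    "(\<lambda>\<alpha>. norm (g \<alpha>) * r ^ mdeg L \<alpha>) summable_on {\<alpha>. supp_in L \<alpha>}"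
    using conv_series_common_radius[OF f g] .
  show ?thesis
  proof (rule conv_seriesI[OF smult_supp_in[OF f g] r(1)])
    show "(\<lambda>\<alpha>. norm (smult f g \<alpha>) * r ^ mdeg L \<alpha>) summable_on {\<alpha>. supp_in L \<alpha>}"
    proof (rule summable_on_comparison_test[OF convolution_summable_on[OF L r(2) _ r(3)]])
      fix \<alpha>
      have "norm (smult f g \<alpha>) * r ^ mdeg L \<alpha>
          \<le> (\<Sum>\<beta>\<in>mon_divisors \<alpha>. norm (f \<beta> * g (\<lambda>i. \<alpha> i - \<beta> i))) * r ^ mdeg L \<alpha>"
        unfolding smult_def using r(1) by (intro mult_right_mono norm_sum) auto
      also have "\<dots> = (\<Sum>\<beta>\<in>mon_divisors \<alpha>. norm (f \<beta>) * r ^ mdeg L \<beta> *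
          (norm (g (\<lambda>i. \<alpha> i - \<beta> i)) * r ^ mdeg L (\<lambda>i. \<alpha> i - \<beta> i)))"
        unfolding sum_distrib_right
        by (intro sum.cong refl) (simp add: mdeg_mon_divisor[where L = L] norm_mult power_add)
      finally show "norm (smult f g \<alpha>) * r ^ mdeg L \<alpha> \<le> \<dots>" .
    qed (use r(1) in auto)
  qed
qed

lemma conv_series_mono:
  assumes "L \<subseteq> N" "finite N" "f \<in> conv_series L"
  shows "f \<in> conv_series N"
proof -
  obtain r where r: "r > 0" "(\<lambda>\<alpha>. norm (f \<alpha>) * r ^ mdeg L \<alpha>) summable_on {\<alpha>. supp_in L \<alpha>}"
    using assms(3) unfolding conv_series_def by blast
  have supp: "f \<alpha> \<noteq> 0 \<Longrightarrow> supp_in L \<alpha>" for \<alpha> using assms(3) by (rule conv_series_supp_in)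
  show ?thesis
  proof (rule conv_seriesI[OF _ r(1)])
    have "(\<lambda>\<alpha>. norm (f \<alpha>) * r ^ mdeg N \<alpha>) summable_on {\<alpha>. supp_in N \<alpha>}
        \<longleftrightarrow> (\<lambda>\<alpha>. norm (f \<alpha>) * r ^ mdeg L \<alpha>) summable_on {\<alpha>. supp_in L \<alpha>}"
    proof (rule summable_on_cong_neutral)
      fix \<alpha> assume "\<alpha> \<in> {\<alpha>. supp_in L \<alpha>} - {\<alpha>. supp_in N \<alpha>}"
      then show "norm (f \<alpha>) * r ^ mdeg L \<alpha> = 0" using assms(1) by (auto simp: supp_in_def)
    next
      fix \<alpha> assume "\<alpha> \<in> {\<alpha>. supp_in N \<alpha>} - {\<alpha>. supp_in L \<alpha>}"
      then show "norm (f \<alpha>) * r ^ mdeg N \<alpha> = 0" using supp by auto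
    next
      fix \<alpha> assume "\<alpha> \<in> {\<alpha>. supp_in N \<alpha>} \<inter> {\<alpha>. supp_in L \<alpha>}"
      then show "norm (f \<alpha>) * r ^ mdeg N \<alpha> = norm (f \<alpha>) * r ^ mdeg L \<alpha>"
        using mdeg_supp_in[OF assms(1,2)] by simp
    qed
    then show "(\<lambda>\<alpha>. norm (f \<alpha>) * r ^ mdeg N \<alpha>) summable_on {\<alpha>. supp_in N \<alpha>}" using r(2) by blast
  qed (use supp assms(1) in \<open>auto simp: supp_in_def\<close>)
qed

lemma trunc_conv_series:
  assumes "L \<subseteq> N" "finite N" "f \<in> conv_series N"
  shows "trunc L f \<in> conv_series L"
proof -
  obtain r where r: "r > 0" "(\<lambda>\<alpha>. norm (f \<alpha>) * r ^ mdeg N \<alpha>) summable_on {\<alpha>. supp_in N \<alpha>}"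
    using assms(3) unfolding conv_series_def by blast
  have "{\<alpha>. supp_in L \<alpha>} \<subseteq> {\<alpha>. supp_in N \<alpha>}" using assms(1) unfolding supp_in_def by auto
  then have "(\<lambda>\<alpha>. norm (f \<alpha>) * r ^ mdeg N \<alpha>) summable_on {\<alpha>. supp_in L \<alpha>}"
    by (rule summable_on_subset_banach[OF r(2)])
  then have "(\<lambda>\<alpha>. norm (trunc L f \<alpha>) * r ^ mdeg L \<alpha>) summable_on {\<alpha>. supp_in L \<alpha>}"
    by (rule summable_on_cong[THEN iffD1, rotated])
      (simp add: trunc_def mdeg_supp_in[OF assms(1,2)])
  with r(1) show ?thesis by (intro conv_seriesI) (simp_all add: trunc_def split: if_splits)
qed

lemma is_ideal_conv_series: "finite L \<Longrightarrow> is_ideal L (conv_series L)"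
  unfolding is_ideal_def using szero_conv_series sadd_conv_series smult_conv_series by blast

lemma ideal_gen_subset: "S \<subseteq> ideal_gen L S"
  unfolding ideal_gen_def by blast

lemma ideal_gen_least: "is_ideal L I \<Longrightarrow> S \<subseteq> I \<Longrightarrow> ideal_gen L S \<subseteq> I"
  unfolding ideal_gen_def by blast

lemma ideal_gen_subset_ideal_gen: "S \<subseteq> ideal_gen L T \<Longrightarrow> ideal_gen L S \<subseteq> ideal_gen L T"
  unfolding ideal_gen_def by blast

lemma szero_in_ideal_gen: "szero \<in> ideal_gen L S"
  unfolding ideal_gen_def is_ideal_def by blast

lemma ideal_gen_eq_self: "is_ideal L I \<Longrightarrow> ideal_gen L I = I"
  using ideal_gen_subset ideal_gen_least by blast

lemma ideal_gen_eq_up_to_szero: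
  assumes "S \<subseteq> T" "T \<subseteq> insert szero S"
  shows "ideal_gen L T = ideal_gen L S"
  using assms ideal_gen_subset szero_in_ideal_gen
  by (intro equalityI ideal_gen_subset_ideal_gen) blast+

lemma is_ideal_ideal_gen:
  assumes "finite L" "S \<subseteq> conv_series L"
  shows "is_ideal L (ideal_gen L S)"
proof -
  have "conv_series L \<in> {I. is_ideal L I \<and> S \<subseteq> I}" using assms is_ideal_conv_series by blast
  then show ?thesis unfolding ideal_gen_def is_ideal_def[of L "\<Inter>_"]
    by (auto simp: is_ideal_def)
qed

lemma trunc_szero: "trunc L szero = szero"
  by (auto simp: trunc_def szero_def)

lemma trunc_sadd: "trunc L (sadd f g) = sadd (trunc L f) (trunc L g)"
  by (auto simp: trunc_def sadd_def)

lemma trunc_smult: "trunc L (smult f g) = smult (trunc L f) (trunc L g)"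
proof
  fix \<alpha>
  show "trunc L (smult f g) \<alpha> = smult (trunc L f) (trunc L g) \<alpha>"
  proof (cases "supp_in L \<alpha>")
    case True
    then show ?thesis unfolding trunc_def smult_def using supp_in_mon_divisor[OF True]
      by (auto intro!: sum.cong)
  next
    case False
    have "trunc L f \<beta> * trunc L g (\<lambda>i. \<alpha> i - \<beta> i) = 0" if "\<beta> \<in> mon_divisors \<alpha>" for \<beta>
      using supp_in_mon_divisor_pair[OF that] False by (auto simp: trunc_def)
    then show ?thesis using False unfolding smult_def trunc_def by (simp add: sum.neutral)
  qed
qed

lemma trunc_conv_series_eq: "f \<in> conv_series L \<Longrightarrow> trunc L f = f"
  using conv_series_supp_in by (fastforce simp: trunc_def)

lemma trunc_smonom: "trunc L (smonom \<alpha>) = (if supp_in L \<alpha> then smonom \<alpha> else szero)"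
  by (auto simp: trunc_def smonom_def szero_def)

lemma is_ideal_trunc_image:
  assumes LN: "L \<subseteq> N" "finite N" and J: "is_ideal N J"
  shows "is_ideal L (trunc L ` J)"
  unfolding is_ideal_def
proof (intro conjI ballI)
  show "trunc L ` J \<subseteq> conv_series L" using J trunc_conv_series[OF LN] by (auto simp: is_ideal_def)
  show "szero \<in> trunc L ` J" using J trunc_szero by (metis image_eqI is_ideal_def)
next
  fix f g assume "f \<in> trunc L ` J" "g \<in> trunc L ` J"
  then show "sadd f g \<in> trunc L ` J"
    using J by (auto simp: is_ideal_def trunc_sadd[symmetric] intro!: imageI)
next
  fix h f assume h: "h \<in> conv_series L" and "f \<in> trunc L ` J"
  then obtain F where F: "F \<in> J" "f = trunc L F" by blast
  have "smult h f = trunc L (smult h F)" using F trunc_smult trunc_conv_series_eq[OF h] by metis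
  moreover have "smult h F \<in> J" using J F conv_series_mono[OF LN h] by (auto simp: is_ideal_def)
  ultimately show "smult h f \<in> trunc L ` J" by blast
qed

lemma restr_ideal_eq_trunc_image:
  "L \<subseteq> N \<Longrightarrow> finite N \<Longrightarrow> is_ideal N J \<Longrightarrow> restr_ideal L J = trunc L ` J"
  unfolding restr_ideal_def by (rule ideal_gen_eq_self[OF is_ideal_trunc_image])

lemma is_ideal_trunc_preimage:
  assumes LN: "L \<subseteq> N" "finite N" and M: "is_ideal L M"
  shows "is_ideal N {f \<in> conv_series N. trunc L f \<in> M}"
  unfolding is_ideal_def
proof (intro conjI ballI)
  show "szero \<in> {f \<in> conv_series N. trunc L f \<in> M}"
    using M szero_conv_series trunc_szero by (auto simp: is_ideal_def)
next
  fix f g assume "f \<in> {f \<in> conv_series N. trunc L f \<in> M}" "g \<in> {f \<in> conv_series N. trunc L f \<in> M}"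
  then show "sadd f g \<in> {f \<in> conv_series N. trunc L f \<in> M}"
    using M sadd_conv_series trunc_sadd by (auto simp: is_ideal_def)
next
  fix h g assume h: "h \<in> conv_series N" and g: "g \<in> {f \<in> conv_series N. trunc L f \<in> M}"
  then have "smult (trunc L h) (trunc L g) \<in> M"
    using M trunc_conv_series[OF LN h] by (auto simp: is_ideal_def)
  then show "smult h g \<in> {f \<in> conv_series N. trunc L f \<in> M}"
    using smult_conv_series[OF LN(2) h] g trunc_smult by auto
qed blast

text \<open>The inclusion \<open>(S)\<^sub>L \<subseteq> (S\<^sub>L)\<close> holds because \<open>{f. f\<^sub>L \<in> (S\<^sub>L)}\<close> is an ideal containing \<open>S\<close>.\<close>
lemma restr_ideal_ideal_gen:
  assumes LN: "L \<subseteq> N" "finite N" and S: "S \<subseteq> conv_series N"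
  shows "restr_ideal L (ideal_gen N S) = ideal_gen L (trunc L ` S)"
proof
  have ideal: "is_ideal N (ideal_gen N S)" using is_ideal_ideal_gen[OF LN(2) S] .
  show "restr_ideal L (ideal_gen N S) \<subseteq> ideal_gen L (trunc L ` S)"
  proof -
    have "trunc L ` S \<subseteq> conv_series L" using S trunc_conv_series[OF LN] by blast
    then have M: "is_ideal L (ideal_gen L (trunc L ` S))"
      using LN finite_subset is_ideal_ideal_gen by blast
    have "ideal_gen N S \<subseteq> {f \<in> conv_series N. trunc L f \<in> ideal_gen L (trunc L ` S)}"
      using S ideal_gen_subset[of "trunc L ` S" L]
      by (intro ideal_gen_least is_ideal_trunc_preimage[OF LN M]) blast
    then show ?thesis unfolding restr_ideal_eq_trunc_image[OF LN ideal] by blast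
  qed
  show "ideal_gen L (trunc L ` S) \<subseteq> restr_ideal L (ideal_gen N S)"
  proof (unfold restr_ideal_def, rule ideal_gen_subset_ideal_gen)
    have "trunc L ` S \<subseteq> trunc L ` ideal_gen N S" using ideal_gen_subset by blast
    also have "\<dots> \<subseteq> ideal_gen L (trunc L ` ideal_gen N S)" by (rule ideal_gen_subset)
    finally show "trunc L ` S \<subseteq> ideal_gen L (trunc L ` ideal_gen N S)" .
  qed
qed

definition is_init_exp :: "series \<Rightarrow> mon \<Rightarrow> bool" where
  "is_init_exp f \<alpha> \<longleftrightarrow> f \<alpha> \<noteq> 0 \<and> (\<forall>\<beta>. f \<beta> \<noteq> 0 \<longrightarrow> \<beta> = \<alpha> \<or> neglex_greater \<alpha> \<beta>)"

lemma neglex_greater_asym: "neglex_greater \<alpha> \<beta> \<Longrightarrow> \<not> neglex_greater \<beta> \<alpha>"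
  unfolding neglex_greater_def by (metis linorder_neqE_nat not_less_iff_gr_or_eq)

lemma init_exp_eqI: "is_init_exp f \<alpha> \<Longrightarrow> init_exp f = \<alpha>"
  unfolding init_exp_def is_init_exp_def by (rule the_equality) (use neglex_greater_asym in metis)+

lemma ex_lex_least_on_prefix:
  fixes S :: "mon set"
  assumes "S \<noteq> {}"
  shows "\<exists>\<alpha>\<in>S. \<forall>\<beta>\<in>S. (\<forall>i<k. \<alpha> i = \<beta> i) \<or> (\<exists>i<k. (\<forall>l<i. \<alpha> l = \<beta> l) \<and> \<alpha> i < \<beta> i)"
proof (induction k)
  case 0
  then show ?case using assms by auto
next
  case (Suc k)
  then obtain \<alpha> where \<alpha>: "\<alpha> \<in> S"
    "\<forall>\<beta>\<in>S. (\<forall>i<k. \<alpha> i = \<beta> i) \<or> (\<exists>i<k. (\<forall>l<i. \<alpha> l = \<beta> l) \<and> \<alpha> i < \<beta> i)"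
    by blast
  define S' where "S' = {\<beta>\<in>S. \<forall>i<k. \<beta> i = \<alpha> i}"
  have "\<alpha> \<in> S'" using \<alpha> by (auto simp: S'_def)
  then obtain \<gamma> where \<gamma>: "\<gamma> \<in> S'" "\<And>\<beta>. \<beta> \<in> S' \<Longrightarrow> \<gamma> k \<le> \<beta> k"
    using ex_has_least_nat[of "\<lambda>\<beta>. \<beta> \<in> S'" \<alpha> "\<lambda>\<beta>. \<beta> k"] by blast
  have "\<gamma> \<in> S" and \<gamma>\<alpha>: "\<forall>i<k. \<gamma> i = \<alpha> i" using \<gamma>(1) by (auto simp: S'_def)
  show ?case
  proof (intro bexI[OF _ \<open>\<gamma> \<in> S\<close>] ballI)
    fix \<beta> assume "\<beta> \<in> S"
    show "(\<forall>i<Suc k. \<gamma> i = \<beta> i) \<or> (\<exists>i<Suc k. (\<forall>l<i. \<gamma> l = \<beta> l) \<and> \<gamma> i < \<beta> i)"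
    proof (cases "\<forall>i<k. \<alpha> i = \<beta> i")
      case True
      then have "\<gamma> k \<le> \<beta> k" using \<gamma>(2) \<open>\<beta> \<in> S\<close> by (auto simp: S'_def)
      moreover have "\<forall>i<k. \<gamma> i = \<beta> i" using True \<gamma>\<alpha> by auto
      ultimately show ?thesis by (metis le_neq_implies_less less_SucE less_SucI)
    next
      case False
      then obtain i where "i < k" "\<forall>l<i. \<alpha> l = \<beta> l" "\<alpha> i < \<beta> i" using \<alpha>(2) \<open>\<beta> \<in> S\<close> by blast
      then show ?thesis using \<gamma>\<alpha> by (intro disjI2 exI[of _ i]) auto
    qed
  qed
qed

lemma ex_is_init_exp:
  assumes N: "finite N" and supp: "\<And>\<alpha>. f \<alpha> \<noteq> 0 \<Longrightarrow> supp_in N \<alpha>" and nz: "f \<noteq> szero"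
  shows "\<exists>\<alpha>. is_init_exp f \<alpha>"
proof -
  obtain m where m: "\<forall>i\<in>N. i < m" using N finite_nat_set_iff_bounded by blast
  have ne: "{\<alpha>. f \<alpha> \<noteq> 0} \<noteq> {}" using nz by (auto simp: szero_def)
  obtain \<alpha> where \<alpha>: "\<alpha> \<in> {\<alpha>. f \<alpha> \<noteq> 0}" and least: "\<forall>\<beta>\<in>{\<alpha>. f \<alpha> \<noteq> 0}.
      (\<forall>i<m. \<alpha> i = \<beta> i) \<or> (\<exists>i<m. (\<forall>l<i. \<alpha> l = \<beta> l) \<and> \<alpha> i < \<beta> i)"
    using ex_lex_least_on_prefix[OF ne, of m] by blast
  have "is_init_exp f \<alpha>" unfolding is_init_exp_def
  proof (intro conjI allI impI)
    show "f \<alpha> \<noteq> 0" using \<alpha> by simp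
    fix \<beta> assume "f \<beta> \<noteq> 0"
    then consider "\<forall>i<m. \<alpha> i = \<beta> i" | "\<exists>i<m. (\<forall>l<i. \<alpha> l = \<beta> l) \<and> \<alpha> i < \<beta> i"
      using least by blast
    then show "\<beta> = \<alpha> \<or> neglex_greater \<alpha> \<beta>"
    proof cases
      case 1
      \<comment> \<open>Exponents in the support vanish from position \<open>m\<close> on.\<close>
      have "\<beta> i = \<alpha> i" for i
      proof (cases "i < m")
        case False
        then have "i \<notin> N" using m by auto
        then show ?thesis using supp[OF \<open>f \<beta> \<noteq> 0\<close>] supp \<alpha> unfolding supp_in_def by simp
      qed (use 1 in auto)
      then show ?thesis by auto
    next
      case 2
      then show ?thesis unfolding neglex_greater_def by blast
    qed
  qed
  then show ?thesis by blast
qed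

lemma is_init_exp_init_exp:
  "finite N \<Longrightarrow> (\<And>\<alpha>. f \<alpha> \<noteq> 0 \<Longrightarrow> supp_in N \<alpha>) \<Longrightarrow> f \<noteq> szero \<Longrightarrow> is_init_exp f (init_exp f)"
  using ex_is_init_exp init_exp_eqI by metis

text \<open>By \<open>final\<close>, the variables of \<open>N\<close> outside \<open>L\<close> are the most significant ones for the negative
  lexicographic order.\<close>
lemma init_exp_trunc_final_segment:
  assumes N: "finite N" and supp: "\<And>\<alpha>. f \<alpha> \<noteq> 0 \<Longrightarrow> supp_in N \<alpha>"
    and final: "\<forall>i\<in>N - L. \<forall>k\<in>L. i < k" and nz: "trunc L f \<noteq> szero"
  shows "init_exp f = init_exp (trunc L f)" "supp_in L (init_exp f)"
proof -
  define \<beta> where "\<beta> = init_exp (trunc L f)"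
  have "\<And>\<alpha>. trunc L f \<alpha> \<noteq> 0 \<Longrightarrow> supp_in N \<alpha>" using supp by (simp add: trunc_def split: if_splits)
  then have init: "is_init_exp (trunc L f) \<beta>" unfolding \<beta>_def by (rule is_init_exp_init_exp[OF N _ nz])
  then have \<beta>: "supp_in L \<beta>" "f \<beta> \<noteq> 0" by (auto simp: is_init_exp_def trunc_def split: if_splits)
  have "is_init_exp f \<beta>" unfolding is_init_exp_def
  proof (intro conjI allI impI \<beta>(2))
    fix \<gamma> assume "f \<gamma> \<noteq> 0"
    show "\<gamma> = \<beta> \<or> neglex_greater \<beta> \<gamma>"
    proof (cases "supp_in L \<gamma>")
      case True
      then have "trunc L f \<gamma> \<noteq> 0" using \<open>f \<gamma> \<noteq> 0\<close> by (simp add: trunc_def)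
      then show ?thesis using init by (simp add: is_init_exp_def)
    next
      case False
      then obtain i where i: "i \<notin> L" "\<gamma> i \<noteq> 0" unfolding supp_in_def by blast
      have "i \<in> N" using supp[OF \<open>f \<gamma> \<noteq> 0\<close>] i(2) unfolding supp_in_def by auto
      have \<beta>0: "\<beta> l = 0" if "l \<le> i" for l
      proof (cases "l \<in> L")
        case True
        then have "i < l" using final i(1) \<open>i \<in> N\<close> by blast
        then show ?thesis using that by simp
      qed (use \<beta>(1) in \<open>simp add: supp_in_def\<close>)
      define k where "k = (LEAST k. \<gamma> k \<noteq> 0)"
      have "\<gamma> k \<noteq> 0" "k \<le> i" "\<forall>l<k. \<gamma> l = 0"
        unfolding k_def using i(2) by (auto intro: LeastI Least_le dest: not_less_Least)
      then have "(\<forall>l<k. \<beta> l = \<gamma> l) \<and> \<beta> k < \<gamma> k" using \<beta>0 by auto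
      then show ?thesis unfolding neglex_greater_def by blast
    qed
  qed
  then have "init_exp f = \<beta>" by (rule init_exp_eqI)
  then show "init_exp f = init_exp (trunc L f)" "supp_in L (init_exp f)" using \<beta>(1) by (simp_all add: \<beta>_def)
qed

lemma trunc_smonom_init_exp:
  assumes N: "finite N" and supp: "\<And>\<alpha>. f \<alpha> \<noteq> 0 \<Longrightarrow> supp_in N \<alpha>"
    and final: "\<forall>i\<in>N - L. \<forall>k\<in>L. i < k" and nz: "f \<noteq> szero"
  shows "trunc L (smonom (init_exp f))
    = (if trunc L f = szero then szero else smonom (init_exp (trunc L f)))"
proof (cases "trunc L f = szero")
  case True
  have "f (init_exp f) \<noteq> 0" using is_init_exp_init_exp[OF N supp nz] by (simp add: is_init_exp_def)
  then have "\<not> supp_in L (init_exp f)" using True by (metis trunc_def szero_def)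
  then show ?thesis using True by (simp add: trunc_smonom)
next
  case False
  then show ?thesis using init_exp_trunc_final_segment[OF N supp final False] by (simp add: trunc_smonom)
qed

lemma ideal_gen_trunc_init_monomials:
  assumes N: "finite N" and J: "J \<subseteq> conv_series N" and final: "\<forall>i\<in>N - L. \<forall>k\<in>L. i < k"
  shows "ideal_gen L (trunc L ` {smonom (init_exp f) | f. f \<in> J \<and> f \<noteq> szero})
    = ideal_gen L {smonom (init_exp g) | g. g \<in> trunc L ` J \<and> g \<noteq> szero}"
proof (rule ideal_gen_eq_up_to_szero)
  have trunc_init: "trunc L (smonom (init_exp f))
      = (if trunc L f = szero then szero else smonom (init_exp (trunc L f)))"
    if "f \<in> J" "f \<noteq> szero" for f
  proof (rule trunc_smonom_init_exp[OF N _ final that(2)])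
    show "\<And>\<alpha>. f \<alpha> \<noteq> 0 \<Longrightarrow> supp_in N \<alpha>" using conv_series_supp_in J that(1) by blast
  qed
  show "{smonom (init_exp g) | g. g \<in> trunc L ` J \<and> g \<noteq> szero}
      \<subseteq> trunc L ` {smonom (init_exp f) | f. f \<in> J \<and> f \<noteq> szero}"
  proof
    fix m assume "m \<in> {smonom (init_exp g) | g. g \<in> trunc L ` J \<and> g \<noteq> szero}"
    then obtain f where f: "f \<in> J" "trunc L f \<noteq> szero" "m = smonom (init_exp (trunc L f))" by blast
    then have "f \<noteq> szero" using trunc_szero by metis
    then have "m = trunc L (smonom (init_exp f))" using trunc_init f by simp
    then show "m \<in> trunc L ` {smonom (init_exp f) | f. f \<in> J \<and> f \<noteq> szero}"
      using f(1) \<open>f \<noteq> szero\<close> by blast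
  qed
  show "trunc L ` {smonom (init_exp f) | f. f \<in> J \<and> f \<noteq> szero}
      \<subseteq> insert szero {smonom (init_exp g) | g. g \<in> trunc L ` J \<and> g \<noteq> szero}"
  proof
    fix m assume "m \<in> trunc L ` {smonom (init_exp f) | f. f \<in> J \<and> f \<noteq> szero}"
    then obtain f where "f \<in> J" "f \<noteq> szero" "m = trunc L (smonom (init_exp f))" by blast
    then show "m \<in> insert szero {smonom (init_exp g) | g. g \<in> trunc L ` J \<and> g \<noteq> szero}"
      using trunc_init by auto
  qed
qed

theorem lemma2p3:
  fixes n j :: nat and J :: "series set"
  assumes "is_ideal {1..n} J"
    and "finite_colength n J"
    and "1 \<le> j" and "j \<le> n"
  shows "init_ideal {j..n} (restr_ideal {j..n} J) = restr_ideal {j..n} (init_ideal {1..n} J)"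
proof -
  let ?N = "{1..n}" and ?L = "{j..n}"
  have LN: "?L \<subseteq> ?N" and final: "\<forall>i\<in>?N - ?L. \<forall>k\<in>?L. i < k" using assms(3) by auto
  have J: "J \<subseteq> conv_series ?N" using assms(1) by (simp add: is_ideal_def)
  define S where "S = {smonom (init_exp f) | f. f \<in> J \<and> f \<noteq> szero}"
  have "S \<subseteq> conv_series ?N"
  proof
    fix m assume "m \<in> S"
    then obtain f where f: "f \<in> J" "f \<noteq> szero" "m = smonom (init_exp f)" by (auto simp: S_def)
    have supp: "\<And>\<alpha>. f \<alpha> \<noteq> 0 \<Longrightarrow> supp_in ?N \<alpha>" using conv_series_supp_in J f(1) by blast
    then have "f (init_exp f) \<noteq> 0"
      using is_init_exp_init_exp[OF finite_atLeastAtMost supp f(2)] by (simp add: is_init_exp_def)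
    then show "m \<in> conv_series ?N" using f(3) supp smonom_conv_series by blast
  qed
  then have "restr_ideal ?L (init_ideal ?N J) = ideal_gen ?L (trunc ?L ` S)"
    unfolding init_ideal_def S_def[symmetric] by (rule restr_ideal_ideal_gen[OF LN finite_atLeastAtMost])
  also have "\<dots> = ideal_gen ?L {smonom (init_exp g) | g. g \<in> trunc ?L ` J \<and> g \<noteq> szero}"
    unfolding S_def by (rule ideal_gen_trunc_init_monomials[OF finite_atLeastAtMost J final])
  also have "\<dots> = init_ideal ?L (restr_ideal ?L J)"
    unfolding init_ideal_def restr_ideal_eq_trunc_image[OF LN finite_atLeastAtMost assms(1)] ..
  finally show ?thesis ..
qed

end
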